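(* Let $F$ be a distribution on $[0,\infty]$, $\boldsymbol\sigma=\{\sigma_1<\dots<\sigma_T\}\subset(0,\infty)$, and let $\mathbf p_1=(p_{11},\dots,p_{1T})$, $\mathbf p_2=(p_{21},\dots,p_{2T})\in[0,1]^T$ with $p_{1t}\le p_{2t}$ for all $t$. Then $r(F,\boldsymbol\sigma,\mathbf p_1)\le r(F,\boldsymbol\sigma,\mathbf p_2)$.
   Context: The $(F,\boldsymbol\sigma,\mathbf p)$ random process: given a distribution $F$ on $[0,\infty]$, points $0<\sigma_1<\dots<\sigma_T$ (called arrivals) and probabilities $\mathbf p=(p_1,\dots,p_T)\in[0,1]^T$. A single unit of a resource is at each time either available or in use; it is available at time $0$. At each $\sigma_t$ at which the unit is available, with probability $p_t$ (independently of everything else) the unit becomes in use for an independent duration $d\sim F$, i.e. it is in use on $(\sigma_t,\sigma_t+d)$ and available again from time $\sigma_t+d$; each such switch from available to in use earns reward $1$. $r(F,\boldsymbol\sigma,\mathbf p)$ denotes the expected total reward. *)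

theory Defs
  imports "HOL-Probability.Probability"
begin

text \<open>Arrivals are indexed 1..T: sigma 1 < ... < sigma T. A distribution F on [0,\<infinity>]
is a probability measure on ennreal (Borel sets).

next_avail sigma T t d: the first arrival index u with t < u \<le> T at which the unit
is available again, given it was taken at sigma t for duration d, i.e. the least u
with sigma u \<ge> sigma t + d; T+1 if there is none.\<close>

definition next_avail :: "(nat \<Rightarrow> real) \<Rightarrow> nat \<Rightarrow> nat \<Rightarrow> ennreal \<Rightarrow> nat" where
  "next_avail \<sigma> T t d =
     (if \<exists>u. t < u \<and> u \<le> T \<and> d \<le> ennreal (\<sigma> u - \<sigma> t)
      then (LEAST u. t < u \<and> u \<le> T \<and> d \<le> ennreal (\<sigma> u - \<sigma> t))
      else Suc T)"

text \<open>val F sigma p T n t: expected total reward collected from arrivals t, t+1, ..., T,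
given that the unit is available at time sigma t (n is fuel, with n \<ge> T + 1 - t enough).\<close>

primrec val :: "ennreal measure \<Rightarrow> (nat \<Rightarrow> real) \<Rightarrow> (nat \<Rightarrow> real) \<Rightarrow> nat \<Rightarrow> nat \<Rightarrow> nat \<Rightarrow> ennreal" where
  "val F \<sigma> p T 0 t = 0"
| "val F \<sigma> p T (Suc n) t =
     (if T < t then 0
      else ennreal (p t) * (1 + (\<integral>\<^sup>+ d. val F \<sigma> p T n (next_avail \<sigma> T t d) \<partial>F))
           + ennreal (1 - p t) * val F \<sigma> p T n (Suc t))"

definition reward :: "ennreal measure \<Rightarrow> (nat \<Rightarrow> real) \<Rightarrow> (nat \<Rightarrow> real) \<Rightarrow> nat \<Rightarrow> ennreal" where
  "reward F \<sigma> p T = val F \<sigma> p T T 1"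

end

theory Submission
  imports Defs
begin

text \<open>Let \<open>W t\<close> be the expected reward from arrivals \<open>t, ..., T\<close> when the unit is available
  at \<open>\<sigma> t\<close>. A joint backward induction shows that \<open>W\<close> is nonincreasing and that
  \<open>W a \<le> 1 + E[W (next_avail x d)]\<close> for all \<open>a > x\<close>: accepting at an arrival is worth at
  least as much as declining it. So \<open>W t\<close>, a convex combination of the accept and decline
  values with weight \<open>p t\<close> on accepting, grows with \<open>p t\<close>, and a second backward induction
  compares the values for \<open>p1\<close> and \<open>p2\<close> at every arrival.\<close>

lemma next_avail_gt: "t \<le> T \<Longrightarrow> t < next_avail \<sigma> T t d"
  unfolding next_avail_def by (auto intro: LeastI2_ex)

lemma next_avail_le: "next_avail \<sigma> T t d \<le> Suc T"
  unfolding next_avail_def by (auto intro: LeastI2_ex)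

lemma next_avail_mono:
  assumes "x \<le> a" "\<sigma> x \<le> \<sigma> a"
  shows "next_avail \<sigma> T x d \<le> next_avail \<sigma> T a d"
proof (cases "\<exists>u. a < u \<and> u \<le> T \<and> d \<le> ennreal (\<sigma> u - \<sigma> a)")
  case True
  define u where "u = (LEAST u. a < u \<and> u \<le> T \<and> d \<le> ennreal (\<sigma> u - \<sigma> a))"
  have "a < u \<and> u \<le> T \<and> d \<le> ennreal (\<sigma> u - \<sigma> a)"
    unfolding u_def using True by (rule LeastI_ex)
  moreover have "ennreal (\<sigma> u - \<sigma> a) \<le> ennreal (\<sigma> u - \<sigma> x)"
    using assms(2) by (intro ennreal_leI) simp
  ultimately have "x < u \<and> u \<le> T \<and> d \<le> ennreal (\<sigma> u - \<sigma> x)"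
    using assms(1) by auto
  then have "next_avail \<sigma> T x d \<le> u"
    unfolding next_avail_def by (auto intro: Least_le)
  with True show ?thesis
    unfolding u_def next_avail_def[of \<sigma> T a] by simp
next
  case False
  then have "next_avail \<sigma> T a d = Suc T"
    unfolding next_avail_def by (simp only: if_False)
  then show ?thesis by (simp add: next_avail_le)
qed

lemma val_Suc_fuel: "Suc T \<le> n + t \<Longrightarrow> val F \<sigma> p T (Suc n) t = val F \<sigma> p T n t"
proof (induction n arbitrary: t)
  case (Suc n)
  show ?case
  proof (cases "T < t")
    case False
    then have "val F \<sigma> p T (Suc n) s = val F \<sigma> p T n s" if "t < s" for s
      using Suc that by simp
    with False show ?thesis by (simp add: next_avail_gt)
  qed simp
qed simp

lemma val_enough_fuel:
  assumes "Suc T \<le> n + t" "n \<le> m"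
  shows "val F \<sigma> p T m t = val F \<sigma> p T n t"
  using assms(2)
proof (induction m rule: dec_induct)
  case (step m)
  then show ?case using assms(1) by (simp add: val_Suc_fuel del: val.simps)
qed simp

definition avail_val :: "ennreal measure \<Rightarrow> (nat \<Rightarrow> real) \<Rightarrow> (nat \<Rightarrow> real) \<Rightarrow> nat \<Rightarrow> nat \<Rightarrow> ennreal" where
  "avail_val F \<sigma> p T t = val F \<sigma> p T (Suc T) t"

lemma avail_val_beyond: "T < t \<Longrightarrow> avail_val F \<sigma> p T t = 0"
  unfolding avail_val_def by simp

lemma avail_val_rec:
  assumes "t \<le> T"
  shows "avail_val F \<sigma> p T t = ennreal (p t) * (1 + (\<integral>\<^sup>+ d. avail_val F \<sigma> p T (next_avail \<sigma> T t d) \<partial>F))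
           + ennreal (1 - p t) * avail_val F \<sigma> p T (Suc t)"
proof -
  have "val F \<sigma> p T T s = avail_val F \<sigma> p T s" if "t < s" for s
    unfolding avail_val_def by (rule val_enough_fuel[symmetric]) (use that in auto)
  with assms show ?thesis
    unfolding avail_val_def[of F \<sigma> p T t] by (simp add: next_avail_gt)
qed

lemma reward_eq_avail_val: "reward F \<sigma> p T = avail_val F \<sigma> p T 1"
  unfolding reward_def avail_val_def by (rule val_enough_fuel[symmetric]) auto

lemma ennreal_convex_comb_same:
  fixes p :: real and C :: ennreal
  assumes "0 \<le> p" "p \<le> 1"
  shows "ennreal p * C + ennreal (1 - p) * C = C"
  using assms by (simp flip: distrib_right ennreal_plus)

lemma ennreal_convex_comb_le:
  fixes p :: real and A B C :: ennreal
  assumes "0 \<le> p" "p \<le> 1" "A \<le> C" "B \<le> C"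
  shows "ennreal p * A + ennreal (1 - p) * B \<le> C"
proof -
  have "ennreal p * A + ennreal (1 - p) * B \<le> ennreal p * C + ennreal (1 - p) * C"
    using assms by (intro add_mono mult_left_mono) auto
  then show ?thesis using assms by (simp add: ennreal_convex_comb_same)
qed

lemma ennreal_convex_comb_ge:
  fixes p :: real and A B C :: ennreal
  assumes "0 \<le> p" "p \<le> 1" "C \<le> A" "C \<le> B"
  shows "C \<le> ennreal p * A + ennreal (1 - p) * B"
proof -
  have "ennreal p * C + ennreal (1 - p) * C \<le> ennreal p * A + ennreal (1 - p) * B"
    using assms by (intro add_mono mult_left_mono) auto
  then show ?thesis using assms by (simp add: ennreal_convex_comb_same)
qed

lemma ennreal_convex_comb_mono_weight:
  fixes p q :: real and A B :: ennreal
  assumes "0 \<le> p" "p \<le> q" "q \<le> 1" "B \<le> A"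
  shows "ennreal p * A + ennreal (1 - p) * B \<le> ennreal q * A + ennreal (1 - q) * B"
proof -
  have q: "ennreal q = ennreal p + ennreal (q - p)" and
    p: "ennreal (1 - p) = ennreal (q - p) + ennreal (1 - q)"
    using assms by (simp_all flip: ennreal_plus)
  have "ennreal p * A + ennreal (1 - p) * B = ennreal p * A + ennreal (q - p) * B + ennreal (1 - q) * B"
    by (simp add: p distrib_right add.assoc)
  also have "\<dots> \<le> ennreal p * A + ennreal (q - p) * A + ennreal (1 - q) * B"
    using assms by (intro add_mono mult_left_mono) auto
  also have "\<dots> = ennreal q * A + ennreal (1 - q) * B"
    by (simp add: q distrib_right)
  finally show ?thesis .
qed

text \<open>Whatever a later arrival a > x would yield is at most one more than accepting at x:
  a unit accepted at x is back no later than one accepted at a, and being available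
  earlier is worth more.\<close>

lemma avail_val_later_le_accept:
  fixes \<sigma> p :: "nat \<Rightarrow> real"
  assumes \<sigma>: "mono_on {1..T} \<sigma>"
    and p: "\<And>t. 1 \<le> t \<Longrightarrow> t \<le> T \<Longrightarrow> 0 \<le> p t \<and> p t \<le> 1"
    and "1 \<le> x"
    and antimono: "\<And>n. x < n \<Longrightarrow> avail_val F \<sigma> p T (Suc n) \<le> avail_val F \<sigma> p T n"
    and "x < a"
  shows "avail_val F \<sigma> p T a \<le> 1 + (\<integral>\<^sup>+ d. avail_val F \<sigma> p T (next_avail \<sigma> T x d) \<partial>F)"
  using \<open>x < a\<close>
proof (induction a rule: nat_descend_induct[where n=T])
  case (base a)
  then show ?case by (simp add: avail_val_beyond)
next
  case (descend a)
  let ?W = "avail_val F \<sigma> p T"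
  have "?W (next_avail \<sigma> T a d) \<le> ?W (next_avail \<sigma> T x d)" for d
  proof (rule lift_Suc_antimono_le_ivl[where N="{x<..}"])
    show "next_avail \<sigma> T x d \<le> next_avail \<sigma> T a d"
      using descend.prems descend.hyps \<open>1 \<le> x\<close> by (intro next_avail_mono mono_onD[OF \<sigma>]) auto
    show "{next_avail \<sigma> T x d..<next_avail \<sigma> T a d} \<subseteq> {x<..}"
      using next_avail_gt[of x T \<sigma> d] descend.prems descend.hyps by auto
  qed (use antimono in auto)
  then have accept: "(\<integral>\<^sup>+ d. ?W (next_avail \<sigma> T a d) \<partial>F) \<le> (\<integral>\<^sup>+ d. ?W (next_avail \<sigma> T x d) \<partial>F)"
    by (rule nn_integral_mono)
  have decline: "?W (Suc a) \<le> 1 + (\<integral>\<^sup>+ d. ?W (next_avail \<sigma> T x d) \<partial>F)"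
    using descend by simp
  show ?case
    unfolding avail_val_rec[OF descend.hyps(1)]
    using p[of a] descend \<open>1 \<le> x\<close> accept decline by (intro ennreal_convex_comb_le add_left_mono) auto
qed

lemma avail_val_Suc_le:
  fixes \<sigma> p :: "nat \<Rightarrow> real"
  assumes \<sigma>: "mono_on {1..T} \<sigma>"
    and p: "\<And>t. 1 \<le> t \<Longrightarrow> t \<le> T \<Longrightarrow> 0 \<le> p t \<and> p t \<le> 1"
  shows "1 \<le> t \<Longrightarrow> avail_val F \<sigma> p T (Suc t) \<le> avail_val F \<sigma> p T t"
proof (induction t rule: nat_descend_induct[where n=T])
  case (base t)
  then show ?case by (simp add: avail_val_beyond)
next
  case (descend t)
  have "avail_val F \<sigma> p T (Suc t) \<le> 1 + (\<integral>\<^sup>+ d. avail_val F \<sigma> p T (next_avail \<sigma> T t d) \<partial>F)"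
    by (rule avail_val_later_le_accept[OF \<sigma> p]) (use descend in auto)
  then show ?case
    unfolding avail_val_rec[OF descend.hyps(1), of F \<sigma> p]
    using p[of t] descend by (intro ennreal_convex_comb_ge) auto
qed

lemma avail_val_mono_prob:
  fixes \<sigma> p q :: "nat \<Rightarrow> real"
  assumes \<sigma>: "mono_on {1..T} \<sigma>"
    and p: "\<And>t. 1 \<le> t \<Longrightarrow> t \<le> T \<Longrightarrow> 0 \<le> p t \<and> p t \<le> 1"
    and q: "\<And>t. 1 \<le> t \<Longrightarrow> t \<le> T \<Longrightarrow> 0 \<le> q t \<and> q t \<le> 1"
    and pq: "\<And>t. 1 \<le> t \<Longrightarrow> t \<le> T \<Longrightarrow> p t \<le> q t"
  shows "1 \<le> t \<Longrightarrow> avail_val F \<sigma> p T t \<le> avail_val F \<sigma> q T t"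
proof (induction t rule: nat_descend_induct[where n=T])
  case (base t)
  then show ?case by (simp add: avail_val_beyond)
next
  case (descend t)
  let ?P = "avail_val F \<sigma> p T" and ?Q = "avail_val F \<sigma> q T"
  have accept: "(\<integral>\<^sup>+ d. ?P (next_avail \<sigma> T t d) \<partial>F) \<le> (\<integral>\<^sup>+ d. ?Q (next_avail \<sigma> T t d) \<partial>F)"
    using descend next_avail_gt[OF descend.hyps(1)] by (intro nn_integral_mono) auto
  have decline: "?P (Suc t) \<le> ?Q (Suc t)"
    using descend by simp
  have "?Q (Suc t) \<le> 1 + (\<integral>\<^sup>+ d. ?Q (next_avail \<sigma> T t d) \<partial>F)"
    by (rule avail_val_later_le_accept[OF \<sigma> q]) (use descend avail_val_Suc_le[OF \<sigma> q] in auto)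
  then have "ennreal (p t) * (1 + (\<integral>\<^sup>+ d. ?Q (next_avail \<sigma> T t d) \<partial>F)) + ennreal (1 - p t) * ?Q (Suc t)
      \<le> ?Q t"
    unfolding avail_val_rec[OF descend.hyps(1), of F \<sigma> q]
    using p[of t] q[of t] pq[of t] descend by (intro ennreal_convex_comb_mono_weight) auto
  moreover have "?P t \<le> ennreal (p t) * (1 + (\<integral>\<^sup>+ d. ?Q (next_avail \<sigma> T t d) \<partial>F)) + ennreal (1 - p t) * ?Q (Suc t)"
    unfolding avail_val_rec[OF descend.hyps(1), of F \<sigma> p]
    using accept decline by (intro add_mono mult_left_mono add_left_mono) simp_all
  ultimately show ?case by (rule order_trans[rotated])
qed

theorem lemma4:
  fixes F :: "ennreal measure" and \<sigma> p1 p2 :: "nat \<Rightarrow> real" and T :: nat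
  assumes "prob_space F" and "sets F = sets borel"
    and "0 < \<sigma> 1" and "\<And>i. 1 \<le> i \<Longrightarrow> i < T \<Longrightarrow> \<sigma> i < \<sigma> (Suc i)"
    and "\<And>t. 1 \<le> t \<Longrightarrow> t \<le> T \<Longrightarrow> 0 \<le> p1 t \<and> p1 t \<le> 1"
    and "\<And>t. 1 \<le> t \<Longrightarrow> t \<le> T \<Longrightarrow> 0 \<le> p2 t \<and> p2 t \<le> 1"
    and "\<And>t. 1 \<le> t \<Longrightarrow> t \<le> T \<Longrightarrow> p1 t \<le> p2 t"
  shows "reward F \<sigma> p1 T \<le> reward F \<sigma> p2 T"
proof -
  have step: "\<sigma> n \<le> \<sigma> (Suc n)" if "n \<in> {1..<T}" for n
    using assms(4)[of n] that by simp
  have \<sigma>: "mono_on {1..T} \<sigma>"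
  proof (rule mono_onI)
    fix i j assume "i \<in> {1..T}" "j \<in> {1..T}" "i \<le> j"
    then show "\<sigma> i \<le> \<sigma> j"
      by (intro lift_Suc_mono_le_ivl[of "{1..<T}" \<sigma>, OF step]) auto
  qed
  show ?thesis
    unfolding reward_eq_avail_val by (rule avail_val_mono_prob[OF \<sigma> assms(5-7)]) simp_all
qed

end
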